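(* Let $\alpha,\beta,p\in\mathbb{C}$ be constants and let $h,g:\mathbb{Z}^2\to\mathbb{C}$ satisfy $$\widehat{h}-\widetilde{h}=\widetilde{\widetilde{g}}-g,\qquad (h+\widetilde g)\,g=\beta^2-\alpha^2 .$$ Let $\varphi_1,\varphi_2:\mathbb{Z}^2\to\mathbb{C}$ be two linearly independent solutions of the Lax pair $$\widetilde{\widetilde{\varphi}}+h\,\widetilde{\varphi}+\alpha^2\varphi=p^2\varphi,\qquad \widehat{\varphi}=\widetilde{\varphi}-g\,\varphi .$$ Then there is a constant $\rho$ such that for all $n,m\in\mathbb{Z}$ $$\varphi_1\widetilde{\varphi}_2-\varphi_2\widetilde{\varphi}_1=\varphi_1\widehat{\varphi}_2-\varphi_2\widehat{\varphi}_1=\rho\,s^{2n}t^{2m},$$ where $s^2=\alpha^2-p^2$ and $t^2=\beta^2-p^2$.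
   Context: Shift notation: for a function $f$ on $\mathbb{Z}^2$ (variables $n,m$), $\widetilde f(n,m)=f(n+1,m)$, $\widehat f(n,m)=f(n,m+1)$, and combined accents denote composed shifts. *)

theory Defs
  imports Complex_Main
begin

end

theory Submission
  imports Defs
begin

text \<open>
  The Casoratian \<open>W = \<phi>1 \<phi>2~ - \<phi>2 \<phi>1~\<close> does not change if the shift \<open>~\<close> is replaced by \<open>^\<close>,
  because \<open>\<phi>^ = \<phi>~ - g \<phi>\<close> differs from \<open>\<phi>~\<close> by a multiple of \<open>\<phi>\<close>.
  The three-term recurrence \<open>\<phi>~~ + h \<phi>~ + (\<alpha>\<^sup>2 - p\<^sup>2) \<phi> = 0\<close> gives \<open>W~ = (\<alpha>\<^sup>2 - p\<^sup>2) W\<close>,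
  and combining it with the second Lax equation gives
  \<open>W^ = (\<alpha>\<^sup>2 - p\<^sup>2 + (h + g~) g) W = (\<beta>\<^sup>2 - p\<^sup>2) W\<close>.
  Hence \<open>W\<close> is a geometric sequence in both directions.
\<close>

lemma powi_geometric_int:
  fixes f :: "int \<Rightarrow> 'a :: field"
  assumes step: "\<And>n. f (n + 1) = a * f n"
  shows "f n = f 0 * a powi n"
proof (cases "a = 0")
  case True
  have "f k = 0" for k using step[of "k - 1"] True by simp
  then show ?thesis by simp
next
  case False
  show ?thesis
  proof (induction n rule: int_induct[where k = 0])
    case base
    then show ?case by simp
  next
    case (step1 i)
    then show ?case using step[of i] False by (simp add: power_int_add_1')
  next
    case (step2 i)
    have "f (i - 1) = f i / a" using step[of "i - 1"] False by (simp add: field_simps)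
    then show ?case using step2 False by (simp add: power_int_diff)
  qed
qed

definition casoratian :: "(int \<Rightarrow> int \<Rightarrow> 'a :: comm_ring) \<Rightarrow> (int \<Rightarrow> int \<Rightarrow> 'a) \<Rightarrow> int \<Rightarrow> int \<Rightarrow> 'a"
  where "casoratian \<phi>1 \<phi>2 n m = \<phi>1 n m * \<phi>2 (n + 1) m - \<phi>2 n m * \<phi>1 (n + 1) m"

lemma casoratian_vertical_shift:
  fixes \<phi>1 \<phi>2 g :: "int \<Rightarrow> int \<Rightarrow> 'a :: comm_ring"
  assumes "\<And>n m. \<phi>1 n (m + 1) = \<phi>1 (n + 1) m - g n m * \<phi>1 n m"
    and "\<And>n m. \<phi>2 n (m + 1) = \<phi>2 (n + 1) m - g n m * \<phi>2 n m"
  shows "\<phi>1 n m * \<phi>2 n (m + 1) - \<phi>2 n m * \<phi>1 n (m + 1) = casoratian \<phi>1 \<phi>2 n m"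
  unfolding casoratian_def assms by (simp add: algebra_simps)

lemma casoratian_step_n:
  fixes \<phi>1 \<phi>2 h :: "int \<Rightarrow> int \<Rightarrow> 'a :: comm_ring"
  assumes rec1: "\<And>n m. \<phi>1 (n + 2) m = - h n m * \<phi>1 (n + 1) m - c * \<phi>1 n m"
    and rec2: "\<And>n m. \<phi>2 (n + 2) m = - h n m * \<phi>2 (n + 1) m - c * \<phi>2 n m"
  shows "casoratian \<phi>1 \<phi>2 (n + 1) m = c * casoratian \<phi>1 \<phi>2 n m"
proof -
  have "casoratian \<phi>1 \<phi>2 (n + 1) m = \<phi>1 (n + 1) m * \<phi>2 (n + 2) m - \<phi>2 (n + 1) m * \<phi>1 (n + 2) m"
    unfolding casoratian_def by (simp add: add.assoc)
  also have "\<dots> = c * casoratian \<phi>1 \<phi>2 n m"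
    unfolding rec1 rec2 casoratian_def by (simp add: algebra_simps)
  finally show ?thesis .
qed

lemma casoratian_step_m:
  fixes \<phi>1 \<phi>2 h g :: "int \<Rightarrow> int \<Rightarrow> 'a :: comm_ring"
  assumes rec1: "\<And>n m. \<phi>1 (n + 2) m = - h n m * \<phi>1 (n + 1) m - c * \<phi>1 n m"
    and rec2: "\<And>n m. \<phi>2 (n + 2) m = - h n m * \<phi>2 (n + 1) m - c * \<phi>2 n m"
    and up1: "\<And>n m. \<phi>1 n (m + 1) = \<phi>1 (n + 1) m - g n m * \<phi>1 n m"
    and up2: "\<And>n m. \<phi>2 n (m + 1) = \<phi>2 (n + 1) m - g n m * \<phi>2 n m"
  shows "casoratian \<phi>1 \<phi>2 n (m + 1)
           = (c + (h n m + g (n + 1) m) * g n m) * casoratian \<phi>1 \<phi>2 n m"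
proof -
  have diag1: "\<phi>1 (n + 1) (m + 1) = - (h n m + g (n + 1) m) * \<phi>1 (n + 1) m - c * \<phi>1 n m"
    using up1[of "n + 1" m] rec1[of n m] by (simp add: algebra_simps)
  have diag2: "\<phi>2 (n + 1) (m + 1) = - (h n m + g (n + 1) m) * \<phi>2 (n + 1) m - c * \<phi>2 n m"
    using up2[of "n + 1" m] rec2[of n m] by (simp add: algebra_simps)
  show ?thesis
    unfolding casoratian_def diag1 diag2 up1[of n m] up2[of n m] by (simp add: algebra_simps)
qed

lemma casoratian_geometric:
  fixes \<phi>1 \<phi>2 :: "int \<Rightarrow> int \<Rightarrow> 'a :: field"
  assumes "\<And>n m. casoratian \<phi>1 \<phi>2 (n + 1) m = a * casoratian \<phi>1 \<phi>2 n m"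
    and "\<And>n m. casoratian \<phi>1 \<phi>2 n (m + 1) = b * casoratian \<phi>1 \<phi>2 n m"
  shows "casoratian \<phi>1 \<phi>2 n m = casoratian \<phi>1 \<phi>2 0 0 * a powi n * b powi m"
proof -
  have "casoratian \<phi>1 \<phi>2 n m = casoratian \<phi>1 \<phi>2 n 0 * b powi m"
    by (rule powi_geometric_int) (rule assms(2))
  also have "casoratian \<phi>1 \<phi>2 n 0 = casoratian \<phi>1 \<phi>2 0 0 * a powi n"
    by (rule powi_geometric_int) (rule assms(1))
  finally show ?thesis .
qed

theorem lemma2p1:
  fixes \<alpha> \<beta> p :: complex
    and h g \<phi>1 \<phi>2 :: "int \<Rightarrow> int \<Rightarrow> complex"
  assumes lat1: "\<And>n m. h n (m + 1) - h (n + 1) m = g (n + 2) m - g n m"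
    and lat2: "\<And>n m. (h n m + g (n + 1) m) * g n m = \<beta>^2 - \<alpha>^2"
    and lax1_1: "\<And>n m. \<phi>1 (n + 2) m + h n m * \<phi>1 (n + 1) m + \<alpha>^2 * \<phi>1 n m = p^2 * \<phi>1 n m"
    and lax2_1: "\<And>n m. \<phi>1 n (m + 1) = \<phi>1 (n + 1) m - g n m * \<phi>1 n m"
    and lax1_2: "\<And>n m. \<phi>2 (n + 2) m + h n m * \<phi>2 (n + 1) m + \<alpha>^2 * \<phi>2 n m = p^2 * \<phi>2 n m"
    and lax2_2: "\<And>n m. \<phi>2 n (m + 1) = \<phi>2 (n + 1) m - g n m * \<phi>2 n m"
    and indep: "\<And>a b :: complex. (\<forall>n m. a * \<phi>1 n m + b * \<phi>2 n m = 0) \<Longrightarrow> a = 0 \<and> b = 0"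
  shows "\<exists>\<rho> :: complex. \<forall>n m.
           \<phi>1 n m * \<phi>2 (n + 1) m - \<phi>2 n m * \<phi>1 (n + 1) m
             = \<phi>1 n m * \<phi>2 n (m + 1) - \<phi>2 n m * \<phi>1 n (m + 1)
         \<and> \<phi>1 n m * \<phi>2 n (m + 1) - \<phi>2 n m * \<phi>1 n (m + 1)
             = \<rho> * (\<alpha>^2 - p^2) powi n * (\<beta>^2 - p^2) powi m"
proof -
  let ?W = "casoratian \<phi>1 \<phi>2"
  have rec1: "\<phi>1 (n + 2) m = - h n m * \<phi>1 (n + 1) m - (\<alpha>^2 - p^2) * \<phi>1 n m" for n m
    using lax1_1[of n m] by (simp add: algebra_simps)
  have rec2: "\<phi>2 (n + 2) m = - h n m * \<phi>2 (n + 1) m - (\<alpha>^2 - p^2) * \<phi>2 n m" for n m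
    using lax1_2[of n m] by (simp add: algebra_simps)
  have step_n: "?W (n + 1) m = (\<alpha>^2 - p^2) * ?W n m" for n m
    using casoratian_step_n[where h = h, OF rec1 rec2] .
  have step_m: "?W n (m + 1) = (\<beta>^2 - p^2) * ?W n m" for n m
  proof -
    have "?W n (m + 1) = (\<alpha>^2 - p^2 + (h n m + g (n + 1) m) * g n m) * ?W n m"
      by (rule casoratian_step_m[where h = h and g = g, OF rec1 rec2 lax2_1 lax2_2])
    then show ?thesis
      unfolding lat2 by (simp add: algebra_simps)
  qed
  have vertical: "\<phi>1 n m * \<phi>2 n (m + 1) - \<phi>2 n m * \<phi>1 n (m + 1) = ?W n m" for n m
    by (rule casoratian_vertical_shift[where g = g, OF lax2_1 lax2_2])
  show ?thesis
  proof (intro exI[of _ "?W 0 0"] allI conjI)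
    fix n m
    show "\<phi>1 n m * \<phi>2 (n + 1) m - \<phi>2 n m * \<phi>1 (n + 1) m
            = \<phi>1 n m * \<phi>2 n (m + 1) - \<phi>2 n m * \<phi>1 n (m + 1)"
      unfolding vertical casoratian_def ..
    show "\<phi>1 n m * \<phi>2 n (m + 1) - \<phi>2 n m * \<phi>1 n (m + 1)
            = ?W 0 0 * (\<alpha>^2 - p^2) powi n * (\<beta>^2 - p^2) powi m"
      unfolding vertical by (rule casoratian_geometric[OF step_n step_m])
  qed
qed

end
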